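(* Consider the CSMA scheduler described in the context, and assume time-scale separation, i.e. at the first slot $t=nT$ of every super slot $n\ge 0$ the link schedule produced by the scheduler is distributed according to the stationary distribution of the Markov chain it induces for the current (fixed) weights. Let $0<\theta,\delta<1$ and let $\Phi_3^*(t)=\max\Phi_3(t)$, the maximum being over all feasible $(x_i(t),\mu_{mi}(t))$. If $$\Phi_3^*(t)\geq \frac{1}{\theta}\Big(|\mathcal{E}|\log 2+\log\frac{1}{\delta}\Big),$$ then at any slot $t=nT$, $n\ge 0$, with probability greater than $1-\delta$ the scheduler produces a schedule $\mu_{mi}(t)$ with $$\Phi_3(t)\geq (1-\theta)\,\Phi_3^*(t).$$
   Context: Setting: link set $\mathcal{E}$, each link $i$ with interference set $\mathcal{C}_i$; job types $\mathcal{M}$ with sizes $s_m$, $s^{max}=\max_m s_m$; nonnegative queue values $Q_{mi}(t),Z_{mi}(t)$ for $m\in\mathcal{M},i\in\mathcal{E}$. A feasible decision is $x_i(t)\in\{0,1\}$ with $x_i(t)+x_j(t)\le 1$ for all $j\in\mathcal{C}_i$, and $\mu_{mi}(t)\in\{0,1\}$ with $\sum_m\mu_{mi}(t)=x_i(t)$. Define $\Phi_3(t)=\sum_{m\in\mathcal{M}}\sum_{i\in\mathcal{E}}\mu_{mi}(t)\,[Q_{mi}(t)+Z_{mi}(t)]$, link weights $w_i(t)=\max_m\{Q_{mi}(t)+Z_{mi}(t)\}$ and $p_i=e^{w_i(t)}/(1+e^{w_i(t)})$. CSMA scheduler: time is divided into super slots of $T\ge s^{max}$ slots. At $t=nT$: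 (control phase) each link $i$ picks $T_i$ uniformly from $\{0,\dots,W-1\}$ (mini-slots); if it hears an INTENT message from a link in $\mathcal{C}_i$ before mini-slot $T_i+1$ it sets $z_i(t)=0$, otherwise it broadcasts INTENT at mini-slot $T_i+1$ and sets $z_i(t)=1$ if no collision, $z_i(t)=0$ if collision. (Scheduling phase) if $z_i(t)=0$ then $x_i(t)=x_i(t-1)$; if $z_i(t)=1$ and some $j\in\mathcal{C}_i$ had $x_j(t-1)=1$ then $x_i(t)=0$; otherwise $x_i(t)=1$ with probability $p_i$ and $0$ with probability $1-p_i$. An active link serves (sets $\mu_{mi}=1$ for) a job type maximizing $Q_{mi}(t)+Z_{mi}(t)$. At $t=nT+\tau$, $0<\tau<T$: $x_i(t)=x_i(nT)$; an active link continues an unfinished job of its current type, otherwise starts a job of a type $m$ maximizing $Q_{mi}(t)+Z_{mi}(t)$ among those with $(n+1)T-t\ge s_m$. *)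

theory Defs
  imports "HOL-Probability.Probability"
begin

definition weight :: "'m set \<Rightarrow> ('m \<Rightarrow> 'l \<Rightarrow> real) \<Rightarrow> ('m \<Rightarrow> 'l \<Rightarrow> real) \<Rightarrow> 'l \<Rightarrow> real" where
  "weight M Q Z i = Max ((\<lambda>m. Q m i + Z m i) ` M)"

definition act_prob :: "'m set \<Rightarrow> ('m \<Rightarrow> 'l \<Rightarrow> real) \<Rightarrow> ('m \<Rightarrow> 'l \<Rightarrow> real) \<Rightarrow> 'l \<Rightarrow> real" where
  "act_prob M Q Z i = exp (weight M Q Z i) / (1 + exp (weight M Q Z i))"

text \<open>Control phase: broadcasters E C T k = links that have broadcast INTENT in one of
  the mini-slots 1..k (link i broadcasts in mini-slot T i + 1 unless it heard an INTENT
  from an interfering link in an earlier mini-slot).\<close>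
primrec broadcasters :: "'l set \<Rightarrow> ('l \<Rightarrow> 'l set) \<Rightarrow> ('l \<Rightarrow> nat) \<Rightarrow> nat \<Rightarrow> 'l set" where
  "broadcasters E C T 0 = {}"
| "broadcasters E C T (Suc k) = broadcasters E C T k \<union>
      {i \<in> E. T i = k \<and> (\<forall>j\<in>C i. j \<notin> broadcasters E C T k)}"

definition decision :: "'l set \<Rightarrow> ('l \<Rightarrow> 'l set) \<Rightarrow> nat \<Rightarrow> ('l \<Rightarrow> nat) \<Rightarrow> 'l \<Rightarrow> bool" where
  "decision E C W T i \<longleftrightarrow>
     (i \<in> broadcasters E C T W \<and> \<not> (\<exists>j\<in>C i. j \<in> broadcasters E C T W \<and> T j = T i))"

text \<open>One transition of the CSMA Markov chain (one super slot), from the set x of links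
  active in the previous super slot.\<close>
definition csma_step :: "'l set \<Rightarrow> ('l \<Rightarrow> 'l set) \<Rightarrow> nat \<Rightarrow> ('l \<Rightarrow> real) \<Rightarrow> 'l set \<Rightarrow> 'l set pmf" where
  "csma_step E C W p x =
     bind_pmf (Pi_pmf E 0 (\<lambda>_. pmf_of_set {0..<W})) (\<lambda>T.
     bind_pmf (Pi_pmf E False (\<lambda>i. bernoulli_pmf (p i))) (\<lambda>c.
     return_pmf {i \<in> E. if decision E C W T i
                        then (\<forall>j\<in>C i. j \<notin> x) \<and> c i
                        else i \<in> x}))"

definition feasible_schedule :: "'l set \<Rightarrow> ('l \<Rightarrow> 'l set) \<Rightarrow> 'l set \<Rightarrow> bool" where
  "feasible_schedule E C x \<longleftrightarrow> x \<subseteq> E \<and> (\<forall>i\<in>x. \<forall>j\<in>C i. j \<notin> x)"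

definition feasible_decision :: "'l set \<Rightarrow> ('l \<Rightarrow> 'l set) \<Rightarrow> 'm set \<Rightarrow> 'l set \<Rightarrow> ('m \<Rightarrow> 'l \<Rightarrow> nat) \<Rightarrow> bool" where
  "feasible_decision E C M x \<mu> \<longleftrightarrow> feasible_schedule E C x \<and> (\<forall>m i. \<mu> m i \<in> {0, 1}) \<and>
     (\<forall>i\<in>E. (\<Sum>m\<in>M. \<mu> m i) = (if i \<in> x then 1 else 0))"

definition Phi3 :: "'l set \<Rightarrow> 'm set \<Rightarrow> ('m \<Rightarrow> 'l \<Rightarrow> real) \<Rightarrow> ('m \<Rightarrow> 'l \<Rightarrow> real) \<Rightarrow> ('m \<Rightarrow> 'l \<Rightarrow> nat) \<Rightarrow> real" where
  "Phi3 E M Q Z \<mu> = (\<Sum>m\<in>M. \<Sum>i\<in>E. real (\<mu> m i) * (Q m i + Z m i))"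

definition Phi3_star :: "'l set \<Rightarrow> ('l \<Rightarrow> 'l set) \<Rightarrow> 'm set \<Rightarrow> ('m \<Rightarrow> 'l \<Rightarrow> real) \<Rightarrow> ('m \<Rightarrow> 'l \<Rightarrow> real) \<Rightarrow> real" where
  "Phi3_star E C M Q Z = Sup {Phi3 E M Q Z \<mu> | x \<mu>. feasible_decision E C M x \<mu>}"

definition served :: "('l \<Rightarrow> 'm) \<Rightarrow> 'l set \<Rightarrow> 'm \<Rightarrow> 'l \<Rightarrow> nat" where
  "served sel x m i = (if i \<in> x \<and> sel i = m then 1 else 0)"

end

theory Submission
  imports Defs
begin

text \<open>The CSMA chain is reversible with respect to the weights \<open>exp (\<Sum>i\<in>x. w\<^sub>i)\<close> on feasible
  schedules: for a fixed backoff vector the links that decide form an independent set, all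
  other links keep their state, and each deciding link with an idle neighbourhood flips a
  coin with logistic bias, whose odds exactly balance the change of weight. Every schedule
  can drop a link with positive probability, so the chain descends to the empty schedule.
  The ratio of a stationary law to the weights is therefore harmonic and, by the maximum
  principle, constant: the stationary law is the Gibbs law. Since at most \<open>2\<^sup>|\<^sup>E\<^sup>|\<close>
  schedules have weight below \<open>(1 - \<theta>) \<Phi>\<^sup>*\<close> and the partition function is at least
  \<open>exp \<Phi>\<^sup>*\<close>, these carry mass below \<open>2\<^sup>|\<^sup>E\<^sup>| exp (- \<theta> \<Phi>\<^sup>*) \<le> \<delta>\<close>.\<close>

definition logistic :: "real \<Rightarrow> real" where
  "logistic w = exp w / (1 + exp w)"

lemma act_prob_logistic: "act_prob M Q Z = (\<lambda>i. logistic (weight M Q Z i))"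
  by (simp add: act_prob_def logistic_def fun_eq_iff)

lemma logistic_bounds: "0 < logistic w" "logistic w < 1"
  by (simp_all add: logistic_def add_pos_pos)

lemma logistic_odds_balance:
  "(if a then exp w else 1) * pmf (bernoulli_pmf (logistic w)) b
     = (if b then exp w else 1) * pmf (bernoulli_pmf (logistic w)) a"
proof -
  have "1 + exp w \<noteq> 0" by (smt (verit) exp_gt_zero)
  then show ?thesis
    using logistic_bounds[of w] by (cases a; cases b) (auto simp: logistic_def field_simps)
qed

lemma broadcasters_iff:
  "i \<in> broadcasters E C T k \<longleftrightarrow> i \<in> E \<and> T i < k \<and> (\<forall>j\<in>C i. j \<notin> broadcasters E C T (T i))"
  by (induction k) (auto simp: less_Suc_eq)

lemma decision_not_adjacent:
  assumes sym: "\<forall>i\<in>E. \<forall>j\<in>C i. i \<in> C j"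
    and di: "decision E C W T i" and dj: "decision E C W T j" and ji: "j \<in> C i"
  shows False
proof -
  from di have bi: "i \<in> broadcasters E C T W"
    and no_clash: "\<not> (\<exists>k\<in>C i. k \<in> broadcasters E C T W \<and> T k = T i)"
    by (auto simp: decision_def)
  from dj have bj: "j \<in> broadcasters E C T W" by (auto simp: decision_def)
  from bi have iE: "i \<in> E" and quiet_i: "\<forall>k\<in>C i. k \<notin> broadcasters E C T (T i)"
    by (auto simp: broadcasters_iff[of i])
  from bj have jE: "j \<in> E" and quiet_j: "\<forall>k\<in>C j. k \<notin> broadcasters E C T (T j)"
    by (auto simp: broadcasters_iff[of j])
  have "T j \<noteq> T i" using no_clash ji bj by auto
  then consider "T j < T i" | "T i < T j" by linarith
  then show False
  proof cases
    case 1
    then have "j \<in> broadcasters E C T (T i)" using jE quiet_j by (simp add: broadcasters_iff[of j])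
    then show False using quiet_i ji by auto
  next
    case 2
    have ij: "i \<in> C j" using sym iE ji by auto
    then have "i \<in> broadcasters E C T (T j)" using iE quiet_i 2 by (simp add: broadcasters_iff[of i])
    then show False using quiet_j ij by auto
  qed
qed

definition csma_outcome ::
    "'l set \<Rightarrow> ('l \<Rightarrow> 'l set) \<Rightarrow> nat \<Rightarrow> ('l \<Rightarrow> nat) \<Rightarrow> ('l \<Rightarrow> bool) \<Rightarrow> 'l set \<Rightarrow> 'l set" where
  "csma_outcome E C W T c x =
     {i \<in> E. if decision E C W T i then (\<forall>j\<in>C i. j \<notin> x) \<and> c i else i \<in> x}"

definition agree_off_decisions ::
    "'l set \<Rightarrow> ('l \<Rightarrow> 'l set) \<Rightarrow> nat \<Rightarrow> ('l \<Rightarrow> nat) \<Rightarrow> 'l set \<Rightarrow> 'l set \<Rightarrow> bool" where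
  "agree_off_decisions E C W T x y \<longleftrightarrow> (\<forall>i\<in>E. \<not> decision E C W T i \<longrightarrow> (i \<in> x \<longleftrightarrow> i \<in> y))"

lemma agree_off_decisions_sym:
  "agree_off_decisions E C W T x y \<longleftrightarrow> agree_off_decisions E C W T y x"
  by (auto simp: agree_off_decisions_def)

lemma pmf_csma_step:
  "pmf (csma_step E C W p x) y = measure_pmf.expectation (Pi_pmf E 0 (\<lambda>_. pmf_of_set {0..<W}))
     (\<lambda>T. measure_pmf.prob (Pi_pmf E False (\<lambda>i. bernoulli_pmf (p i))) {c. csma_outcome E C W T c x = y})"
  unfolding csma_step_def map_pmf_def[symmetric] pmf_bind pmf_map vimage_def csma_outcome_def
  by simp

text \<open>Neighbours of a deciding link do not decide themselves, so they are the same in both schedules.\<close>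
lemma idle_neighbourhood_agree:
  assumes sym: "\<forall>i\<in>E. \<forall>j\<in>C i. i \<in> C j" and CE: "\<forall>i\<in>E. C i \<subseteq> E"
    and agr: "agree_off_decisions E C W T x y"
    and iE: "i \<in> E" and d: "decision E C W T i"
  shows "(\<forall>j\<in>C i. j \<notin> x) \<longleftrightarrow> (\<forall>j\<in>C i. j \<notin> y)"
proof -
  have "j \<in> x \<longleftrightarrow> j \<in> y" if j: "j \<in> C i" for j
  proof -
    have "j \<in> E" using CE iE j by auto
    moreover have "\<not> decision E C W T j" using decision_not_adjacent[OF sym d _ j] by auto
    ultimately show ?thesis using agr by (auto simp: agree_off_decisions_def)
  qed
  then show ?thesis by auto
qed

lemma csma_outcome_eq_iff:
  assumes sym: "\<forall>i\<in>E. \<forall>j\<in>C i. i \<in> C j" and CE: "\<forall>i\<in>E. C i \<subseteq> E"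
    and fy: "feasible_schedule E C y" and agr: "agree_off_decisions E C W T x y"
  shows "csma_outcome E C W T c x = y \<longleftrightarrow>
    (\<forall>i\<in>E. decision E C W T i \<and> (\<forall>j\<in>C i. j \<notin> x) \<longrightarrow> (c i \<longleftrightarrow> i \<in> y))"
    (is "_ \<longleftrightarrow> ?coins")
proof
  assume "csma_outcome E C W T c x = y"
  then show ?coins unfolding csma_outcome_def by auto
next
  assume coins: ?coins
  have yE: "y \<subseteq> E" and y_indep: "\<forall>i\<in>y. \<forall>j\<in>C i. j \<notin> y"
    using fy by (auto simp: feasible_schedule_def)
  show "csma_outcome E C W T c x = y"
  proof (intro set_eqI iffI)
    fix i assume "i \<in> csma_outcome E C W T c x"
    then show "i \<in> y" using coins agr by (auto simp: csma_outcome_def agree_off_decisions_def split: if_splits)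
  next
    fix i assume iy: "i \<in> y"
    then have iE: "i \<in> E" using yE by auto
    show "i \<in> csma_outcome E C W T c x"
    proof (cases "decision E C W T i")
      case True
      then have "\<forall>j\<in>C i. j \<notin> x"
        using idle_neighbourhood_agree[OF sym CE agr iE] y_indep iy by auto
      then show ?thesis using coins True iE iy by (auto simp: csma_outcome_def)
    next
      case False
      then show ?thesis using iy agr iE by (auto simp: csma_outcome_def agree_off_decisions_def)
    qed
  qed
qed

lemma prob_csma_outcome:
  assumes fin: "finite E" and sym: "\<forall>i\<in>E. \<forall>j\<in>C i. i \<in> C j" and CE: "\<forall>i\<in>E. C i \<subseteq> E"
    and fy: "feasible_schedule E C y"
  shows "measure_pmf.prob (Pi_pmf E False (\<lambda>i. bernoulli_pmf (p i))) {c. csma_outcome E C W T c x = y}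
     = (if agree_off_decisions E C W T x y
        then (\<Prod>i\<in>E. if decision E C W T i \<and> (\<forall>j\<in>C i. j \<notin> x)
                       then pmf (bernoulli_pmf (p i)) (i \<in> y) else 1)
        else 0)"
proof (cases "agree_off_decisions E C W T x y")
  case True
  have "{c. csma_outcome E C W T c x = y} =
      Pi E (\<lambda>i. if decision E C W T i \<and> (\<forall>j\<in>C i. j \<notin> x) then {i \<in> y} else UNIV)"
    using csma_outcome_eq_iff[OF sym CE fy True] by (auto simp: Pi_def)
  then show ?thesis using True
    by (simp add: measure_Pi_pmf_Pi[OF fin] measure_pmf_single if_distrib cong: if_cong)
next
  case False
  then obtain i where "i \<in> E" "\<not> decision E C W T i" "i \<in> x \<longleftrightarrow> i \<notin> y"
    by (auto simp: agree_off_decisions_def)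
  then have "{c. csma_outcome E C W T c x = y} = {}" by (auto simp: csma_outcome_def)
  then show ?thesis using False by simp
qed

section \<open>Detailed balance and descent\<close>

lemma exp_sum_as_prod:
  assumes "finite E" "x \<subseteq> E"
  shows "exp (\<Sum>i\<in>x. w i) = (\<Prod>i\<in>E. if i \<in> x then exp (w i) else 1)"
  using assms by (simp add: prod.If_cases Int_absorb1 exp_sum finite_subset)

lemma prob_csma_outcome_balance:
  assumes fin: "finite E" and sym: "\<forall>i\<in>E. \<forall>j\<in>C i. i \<in> C j" and CE: "\<forall>i\<in>E. C i \<subseteq> E"
    and fx: "feasible_schedule E C x" and fy: "feasible_schedule E C y"
  shows "exp (\<Sum>i\<in>x. w i) * measure_pmf.prob (Pi_pmf E False (\<lambda>i. bernoulli_pmf (logistic (w i))))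
            {c. csma_outcome E C W T c x = y}
       = exp (\<Sum>i\<in>y. w i) * measure_pmf.prob (Pi_pmf E False (\<lambda>i. bernoulli_pmf (logistic (w i))))
            {c. csma_outcome E C W T c y = x}"
proof (cases "agree_off_decisions E C W T x y")
  case agr: True
  define S where "S i \<longleftrightarrow> decision E C W T i \<and> (\<forall>j\<in>C i. j \<notin> x)" for i
  have Sy: "decision E C W T i \<and> (\<forall>j\<in>C i. j \<notin> y) \<longleftrightarrow> S i" if "i \<in> E" for i
    using idle_neighbourhood_agree[OF sym CE agr that] unfolding S_def by auto
  have link: "(if i \<in> x then exp (w i) else 1) * (if S i then pmf (bernoulli_pmf (logistic (w i))) (i \<in> y) else 1)
     = (if i \<in> y then exp (w i) else 1) * (if S i then pmf (bernoulli_pmf (logistic (w i))) (i \<in> x) else 1)"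
    if iE: "i \<in> E" for i
  proof (cases "S i")
    case True
    then show ?thesis
      using logistic_odds_balance[of "i \<in> x" "w i" "i \<in> y"] by simp
  next
    case False
    have "i \<in> x \<longleftrightarrow> i \<in> y"
    proof (cases "decision E C W T i")
      case True
      then have "\<not> (\<forall>j\<in>C i. j \<notin> x)" "\<not> (\<forall>j\<in>C i. j \<notin> y)"
        using False Sy[OF iE] by (auto simp: S_def)
      then have "i \<notin> x" "i \<notin> y" using fx fy by (auto simp: feasible_schedule_def)
      then show ?thesis by simp
    qed (use agr iE in \<open>auto simp: agree_off_decisions_def\<close>)
    then show ?thesis using False by simp
  qed
  have forward: "measure_pmf.prob (Pi_pmf E False (\<lambda>i. bernoulli_pmf (logistic (w i))))
      {c. csma_outcome E C W T c x = y} = (\<Prod>i\<in>E. if S i then pmf (bernoulli_pmf (logistic (w i))) (i \<in> y) else 1)"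
    unfolding prob_csma_outcome[OF fin sym CE fy] using agr by (simp add: S_def)
  have backward: "measure_pmf.prob (Pi_pmf E False (\<lambda>i. bernoulli_pmf (logistic (w i))))
      {c. csma_outcome E C W T c y = x} = (\<Prod>i\<in>E. if S i then pmf (bernoulli_pmf (logistic (w i))) (i \<in> x) else 1)"
    unfolding prob_csma_outcome[OF fin sym CE fx] using agr
    by (auto simp: agree_off_decisions_sym Sy intro!: prod.cong)
  have xE: "x \<subseteq> E" and yE: "y \<subseteq> E" using fx fy by (auto simp: feasible_schedule_def)
  show ?thesis
    unfolding forward backward exp_sum_as_prod[OF fin xE] exp_sum_as_prod[OF fin yE]
      prod.distrib[symmetric]
    by (rule prod.cong[OF refl link])
next
  case False
  then show ?thesis
    unfolding prob_csma_outcome[OF fin sym CE fy] prob_csma_outcome[OF fin sym CE fx]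
    by (simp add: agree_off_decisions_sym)
qed

lemma csma_step_detailed_balance:
  assumes "finite E" and "\<forall>i\<in>E. \<forall>j\<in>C i. i \<in> C j" and "\<forall>i\<in>E. C i \<subseteq> E"
    and "feasible_schedule E C x" and "feasible_schedule E C y"
  shows "exp (\<Sum>i\<in>x. w i) * pmf (csma_step E C W (\<lambda>i. logistic (w i)) x) y
       = exp (\<Sum>i\<in>y. w i) * pmf (csma_step E C W (\<lambda>i. logistic (w i)) y) x"
  unfolding pmf_csma_step integral_mult_right_zero[symmetric]
  by (rule Bochner_Integration.integral_cong[OF refl prob_csma_outcome_balance[OF assms]])

text \<open>Witness: only the given link backs off to mini-slot 0, so it decides, and every coin fails.\<close>
lemma csma_step_drops_link:
  assumes fin: "finite E" and CE: "\<forall>i\<in>E. C i \<subseteq> E" and irr: "\<forall>i\<in>E. i \<notin> C i"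
    and fx: "feasible_schedule E C x" and ix: "i \<in> x" and W: "W \<ge> 2"
    and p: "\<forall>i. 0 < p i \<and> p i < 1"
  shows "\<exists>x'. x' \<subset> x \<and> feasible_schedule E C x' \<and> 0 < pmf (csma_step E C W p x) x'"
proof -
  have iE: "i \<in> E" using fx ix by (auto simp: feasible_schedule_def)
  define T where "T = (\<lambda>j. if j \<in> E \<and> j \<noteq> i then 1 else (0::nat))"
  define c :: "'a \<Rightarrow> bool" where "c = (\<lambda>_. False)"
  define x' where "x' = csma_outcome E C W T c x"
  have "T i = 0" by (simp add: T_def)
  then have "i \<in> broadcasters E C T W" using iE W by (simp add: broadcasters_iff[of i])
  moreover have "\<not> (\<exists>j\<in>C i. j \<in> broadcasters E C T W \<and> T j = T i)"
    using CE irr iE by (auto simp: T_def)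
  ultimately have dec: "decision E C W T i" by (simp add: decision_def)
  have sub: "x' \<subseteq> x" using fx by (auto simp: x'_def csma_outcome_def c_def feasible_schedule_def)
  moreover have "i \<notin> x'" using dec by (simp add: x'_def csma_outcome_def c_def)
  ultimately have "x' \<subset> x" using ix by auto
  moreover have "feasible_schedule E C x'" using fx sub by (auto simp: feasible_schedule_def)
  moreover have "0 < pmf (csma_step E C W p x) x'"
  proof (rule pmf_positive)
    have "T \<in> set_pmf (Pi_pmf E 0 (\<lambda>_. pmf_of_set {0..<W}))"
      using W by (auto simp: set_Pi_pmf[OF fin] PiE_dflt_def T_def)
    moreover have "c \<in> set_pmf (Pi_pmf E False (\<lambda>i. bernoulli_pmf (p i)))"
      using p by (auto simp: set_Pi_pmf[OF fin] PiE_dflt_def c_def)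
    ultimately show "x' \<in> set_pmf (csma_step E C W p x)"
      unfolding csma_step_def set_bind_pmf set_return_pmf x'_def csma_outcome_def
      by (intro UN_I) simp_all
  qed
  ultimately show ?thesis by blast
qed

section \<open>Stationary laws of reversible chains\<close>

lemma harmonic_max_propagates:
  fixes P :: "'a \<Rightarrow> 'a \<Rightarrow> real"
  assumes fin: "finite F" and substoch: "\<forall>y\<in>F. (\<Sum>x\<in>F. P y x) \<le> 1" and P_nonneg: "\<forall>y x. 0 \<le> P y x"
    and harmonic: "\<forall>y\<in>F. h y = (\<Sum>x\<in>F. P y x * h x)" and h_nonneg: "\<forall>x\<in>F. 0 \<le> h x"
    and yF: "y \<in> F" and xF: "x \<in> F" and hy: "h y = Max (h ` F)" and Pyx: "0 < P y x"
  shows "h x = Max (h ` F)"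
proof (rule ccontr)
  define hmax where "hmax = Max (h ` F)"
  have hle: "h z \<le> hmax" if "z \<in> F" for z using fin that by (simp add: hmax_def)
  assume "h x \<noteq> Max (h ` F)"
  then have "h x < hmax" using hle[OF xF] by (simp add: hmax_def)
  then have "(\<Sum>z\<in>F. P y z * h z) < (\<Sum>z\<in>F. P y z * hmax)"
    using fin hle P_nonneg xF Pyx
    by (intro sum_strict_mono_ex1) (auto intro!: mult_left_mono bexI[of _ x])
  also have "\<dots> = (\<Sum>z\<in>F. P y z) * hmax" by (simp add: sum_distrib_right)
  also have "\<dots> \<le> hmax"
    using substoch yF hle[OF yF] h_nonneg by (intro mult_left_le_one_le) (auto simp: P_nonneg intro: sum_nonneg)
  finally show False using harmonic yF hy by (simp add: hmax_def)
qed

lemma reversible_stationary_ratio_harmonic: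
  fixes K :: "'a \<Rightarrow> 'a pmf" and g :: "'a \<Rightarrow> real"
  assumes fin: "finite F" and stationary: "bind_pmf \<pi> K = \<pi>" and support: "set_pmf \<pi> \<subseteq> F"
    and g_pos: "\<forall>x\<in>F. 0 < g x"
    and balance: "\<forall>x\<in>F. \<forall>y\<in>F. g x * pmf (K x) y = g y * pmf (K y) x"
    and yF: "y \<in> F"
  shows "pmf \<pi> y / g y = (\<Sum>x\<in>F. pmf (K y) x * (pmf \<pi> x / g x))"
proof -
  have "pmf \<pi> y = (\<Sum>x\<in>F. pmf (K x) y * pmf \<pi> x)"
    unfolding pmf_bind[of \<pi> K y, unfolded stationary]
    by (rule integral_measure_pmf_real[OF fin]) (use support in auto)
  also have "\<dots> = (\<Sum>x\<in>F. (pmf \<pi> x / g x) * (g x * pmf (K x) y))"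
    using g_pos by (intro sum.cong) auto
  also have "\<dots> = (\<Sum>x\<in>F. (pmf \<pi> x / g x) * (g y * pmf (K y) x))"
    using balance yF by (intro sum.cong) auto
  also have "\<dots> = g y * (\<Sum>x\<in>F. pmf (K y) x * (pmf \<pi> x / g x))"
    by (simp add: sum_distrib_left algebra_simps)
  finally have "pmf \<pi> y = g y * (\<Sum>x\<in>F. pmf (K y) x * (pmf \<pi> x / g x))" .
  moreover have "0 < g y" using g_pos yF by blast
  ultimately show ?thesis by (simp add: field_simps)
qed

lemma stationary_eq_reversing_measure:
  fixes K :: "'a \<Rightarrow> 'a pmf" and g :: "'a \<Rightarrow> real" and r :: "'a \<Rightarrow> nat"
  assumes fin: "finite F" and stationary: "bind_pmf \<pi> K = \<pi>" and support: "set_pmf \<pi> \<subseteq> F"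
    and g_pos: "\<forall>x\<in>F. 0 < g x"
    and balance: "\<forall>x\<in>F. \<forall>y\<in>F. g x * pmf (K x) y = g y * pmf (K y) x"
    and root: "x\<^sub>0 \<in> F"
    and descent: "\<forall>x\<in>F. x \<noteq> x\<^sub>0 \<longrightarrow> (\<exists>y\<in>F. r y < r x \<and> 0 < pmf (K x) y)"
    and xF: "x \<in> F"
  shows "pmf \<pi> x = g x / (\<Sum>y\<in>F. g y)"
proof -
  define h where "h x = pmf \<pi> x / g x" for x
  define hmax where "hmax = Max (h ` F)"
  have \<pi>_h: "pmf \<pi> x = h x * g x" if "x \<in> F" for x
  proof -
    have "0 < g x" using g_pos that by blast
    then show ?thesis by (simp add: h_def)
  qed
  have total: "(\<Sum>x\<in>F. pmf \<pi> x) = 1"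
    using support fin by (simp add: sum_pmf_eq_1)
  have harmonic: "\<forall>y\<in>F. h y = (\<Sum>x\<in>F. pmf (K y) x * h x)"
    unfolding h_def using reversible_stationary_ratio_harmonic[OF fin stationary support g_pos balance]
    by blast
  have substoch: "\<forall>y\<in>F. (\<Sum>x\<in>F. pmf (K y) x) \<le> 1"
    using fin by (simp add: measure_measure_pmf_finite[symmetric])
  have h_nonneg: "\<forall>x\<in>F. 0 \<le> h x" using g_pos by (auto simp: h_def less_imp_le)
  have max_iff: "h x = hmax \<longleftrightarrow> h y = hmax" if xF: "x \<in> F" and yF: "y \<in> F"
    and Pxy: "0 < pmf (K x) y" for x y
  proof -
    have "0 < g x" "0 < g y" using g_pos xF yF by blast+
    then have "0 < g y * pmf (K y) x" using balance xF yF Pxy by (metis mult_pos_pos)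
    then have Pyx: "0 < pmf (K y) x" using \<open>0 < g y\<close> by (simp add: zero_less_mult_iff)
    show ?thesis
      using harmonic_max_propagates[OF fin substoch _ harmonic h_nonneg xF yF _ Pxy]
        harmonic_max_propagates[OF fin substoch _ harmonic h_nonneg yF xF _ Pyx]
      unfolding hmax_def by auto
  qed
  have root_max: "h x = hmax \<longleftrightarrow> h x\<^sub>0 = hmax" if "x \<in> F" for x
    using that
  proof (induction "r x" arbitrary: x rule: less_induct)
    case less
    show ?case
    proof (cases "x = x\<^sub>0")
      case False
      then obtain y where "y \<in> F" "r y < r x" "0 < pmf (K x) y" using descent less.prems by blast
      then show ?thesis using less max_iff by blast
    qed simp
  qed
  have "hmax \<in> h ` F" unfolding hmax_def using fin root by (intro Max_in) auto
  then have h_const: "h x = hmax" if "x \<in> F" for x using root_max that by auto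
  have "1 = hmax * (\<Sum>y\<in>F. g y)"
    unfolding total[symmetric] sum_distrib_left by (rule sum.cong) (simp_all add: \<pi>_h h_const)
  then have "(\<Sum>y\<in>F. g y) \<noteq> 0" by auto
  with \<open>1 = hmax * (\<Sum>y\<in>F. g y)\<close> show ?thesis
    using \<pi>_h[OF xF] h_const[OF xF] by (simp add: eq_divide_eq mult.commute)
qed

lemma csma_stationary_gibbs:
  assumes fin: "finite E" and CE: "\<forall>i\<in>E. C i \<subseteq> E" and irr: "\<forall>i\<in>E. i \<notin> C i"
    and sym: "\<forall>i\<in>E. \<forall>j\<in>C i. i \<in> C j" and W: "W \<ge> 2"
    and stationary: "bind_pmf \<pi> (csma_step E C W (\<lambda>i. logistic (w i))) = \<pi>"
    and support: "set_pmf \<pi> \<subseteq> {x. feasible_schedule E C x}"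
    and fx: "feasible_schedule E C x"
  shows "pmf \<pi> x = exp (\<Sum>i\<in>x. w i) / (\<Sum>y\<in>{y. feasible_schedule E C y}. exp (\<Sum>i\<in>y. w i))"
proof -
  define F where "F = {y. feasible_schedule E C y}"
  define K where "K = csma_step E C W (\<lambda>i. logistic (w i))"
  define g where "g y = exp (\<Sum>i\<in>y. w i)" for y :: "'a set"
  have "F \<subseteq> Pow E" by (auto simp: F_def feasible_schedule_def)
  then have fin_F: "finite F" by (rule finite_subset) (use fin in simp)
  have balance: "\<forall>x\<in>F. \<forall>y\<in>F. g x * pmf (K x) y = g y * pmf (K y) x"
    unfolding F_def K_def g_def using csma_step_detailed_balance[OF fin sym CE] by blast
  have descent: "\<forall>x\<in>F. x \<noteq> {} \<longrightarrow> (\<exists>y\<in>F. card y < card x \<and> 0 < pmf (K x) y)"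
  proof (intro ballI impI)
    fix x assume "x \<in> F" "x \<noteq> {}"
    then have fx: "feasible_schedule E C x" by (simp add: F_def)
    then have "finite x" using fin by (meson feasible_schedule_def finite_subset)
    obtain i where "i \<in> x" using \<open>x \<noteq> {}\<close> by blast
    have "\<forall>i. 0 < logistic (w i) \<and> logistic (w i) < 1" using logistic_bounds by blast
    from csma_step_drops_link[OF fin CE irr fx \<open>i \<in> x\<close> W this]
    obtain x' where x': "x' \<subset> x \<and> feasible_schedule E C x' \<and> 0 < pmf (K x) x'"
      unfolding K_def ..
    show "\<exists>y\<in>F. card y < card x \<and> 0 < pmf (K x) y"
    proof (rule bexI[of _ x'])
      show "x' \<in> F" using x' by (simp add: F_def)
      show "card x' < card x \<and> 0 < pmf (K x) x'" using x' psubset_card_mono[OF \<open>finite x\<close>] by simp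
    qed
  qed
  have "pmf \<pi> x = g x / (\<Sum>y\<in>F. g y)"
  proof (rule stationary_eq_reversing_measure[OF fin_F _ _ _ balance _ descent])
    show "bind_pmf \<pi> K = \<pi>" using stationary by (simp add: K_def)
  qed (use support fx in \<open>simp_all add: F_def g_def feasible_schedule_def\<close>)
  then show ?thesis by (simp add: F_def g_def)
qed

section \<open>Lower tail of Gibbs laws\<close>

lemma margin_exp_bound:
  assumes \<delta>: "0 < \<delta>" and margin: "real n * ln 2 + ln (1 / \<delta>) \<le> \<theta> * \<Phi>"
  shows "2 ^ n * exp ((1 - \<theta>) * \<Phi>) \<le> \<delta> * exp \<Phi>"
proof -
  have "2 ^ n * exp ((1 - \<theta>) * \<Phi>) = \<delta> * (exp (real n * ln 2 + ln (1 / \<delta>)) * exp ((1 - \<theta>) * \<Phi>))"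
    using \<delta> by (simp add: exp_add exp_of_nat_mult)
  also have "\<dots> \<le> \<delta> * (exp (\<theta> * \<Phi>) * exp ((1 - \<theta>) * \<Phi>))"
    using margin \<delta> by (intro mult_left_mono mult_right_mono) auto
  also have "\<dots> = \<delta> * exp \<Phi>" by (simp add: exp_add[symmetric] algebra_simps)
  finally show ?thesis .
qed

lemma gibbs_lower_tail:
  fixes U :: "'a \<Rightarrow> real" and \<pi> :: "'a pmf"
  assumes fin: "finite F" and card: "card F \<le> 2 ^ n" and support: "set_pmf \<pi> \<subseteq> F"
    and gibbs: "\<forall>x\<in>F. pmf \<pi> x = exp (U x) / (\<Sum>y\<in>F. exp (U y))"
    and x\<^sub>o: "x\<^sub>o \<in> F" and \<Phi>: "\<Phi> \<le> U x\<^sub>o"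
    and \<delta>: "0 < \<delta>" and margin: "real n * ln 2 + ln (1 / \<delta>) \<le> \<theta> * \<Phi>"
  shows "1 - \<delta> < measure_pmf.prob \<pi> {x. (1 - \<theta>) * \<Phi> \<le> U x}"
proof -
  define B where "B = {x \<in> F. U x < (1 - \<theta>) * \<Phi>}"
  define Zs where "Zs = (\<Sum>y\<in>F. exp (U y))"
  have "exp \<Phi> \<le> exp (U x\<^sub>o)" using \<Phi> by simp
  also have "\<dots> \<le> Zs" unfolding Zs_def using fin x\<^sub>o by (intro member_le_sum) auto
  finally have Zs: "exp \<Phi> \<le> Zs" .
  have "measure_pmf.prob \<pi> (UNIV - {x. (1 - \<theta>) * \<Phi> \<le> U x})
      = measure_pmf.prob \<pi> ((UNIV - {x. (1 - \<theta>) * \<Phi> \<le> U x}) \<inter> set_pmf \<pi>)"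
    by (simp add: measure_Int_set_pmf)
  also have "(UNIV - {x. (1 - \<theta>) * \<Phi> \<le> U x}) \<inter> set_pmf \<pi> = B \<inter> set_pmf \<pi>"
    using support by (auto simp: B_def)
  finally have good: "measure_pmf.prob \<pi> {x. (1 - \<theta>) * \<Phi> \<le> U x} = 1 - measure_pmf.prob \<pi> B"
    using measure_pmf.prob_compl[of "{x. (1 - \<theta>) * \<Phi> \<le> U x}" \<pi>]
    by (simp add: measure_Int_set_pmf)
  have weight_bound: "2 ^ n * exp ((1 - \<theta>) * \<Phi>) \<le> \<delta> * exp \<Phi>"
    using margin_exp_bound[OF \<delta> margin] .
  have "measure_pmf.prob \<pi> B < \<delta>"
  proof (cases "B = {}")
    case False
    have "(\<Sum>x\<in>B. exp (U x)) < (\<Sum>x\<in>B. exp ((1 - \<theta>) * \<Phi>))"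
      using fin False by (intro sum_strict_mono) (auto simp: B_def)
    also have "\<dots> \<le> 2 ^ n * exp ((1 - \<theta>) * \<Phi>)"
    proof -
      have "card B \<le> card F" using fin by (intro card_mono) (auto simp: B_def)
      then have "real (card B) \<le> 2 ^ n" using card by (metis of_nat_le_iff of_nat_numeral of_nat_power order_trans)
      then show ?thesis by (simp add: mult_right_mono)
    qed
    finally have sum_B: "(\<Sum>x\<in>B. exp (U x)) < 2 ^ n * exp ((1 - \<theta>) * \<Phi>)" .
    have "measure_pmf.prob \<pi> B = (\<Sum>x\<in>B. exp (U x)) / Zs"
      using fin gibbs by (simp add: measure_measure_pmf_finite B_def Zs_def sum_divide_distrib)
    also have "\<dots> < 2 ^ n * exp ((1 - \<theta>) * \<Phi>) / Zs"
      using sum_B Zs by (intro divide_strict_right_mono) (auto intro: less_le_trans[OF exp_gt_zero])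
    also have "\<dots> \<le> \<delta> * exp \<Phi> / Zs"
      using weight_bound Zs by (intro divide_right_mono) (auto intro: order_trans[OF exp_ge_zero])
    also have "\<dots> \<le> \<delta>"
    proof -
      have "0 < Zs" using Zs exp_gt_zero[of \<Phi>] by linarith
      then show ?thesis using Zs \<delta> by (simp add: pos_divide_le_eq)
    qed
    finally show ?thesis .
  qed (use \<delta> in simp)
  then show ?thesis using good by simp
qed

lemma Phi3_served:
  assumes fM: "finite M" and fE: "finite E" and xE: "x \<subseteq> E"
    and sel: "\<forall>i\<in>E. sel i \<in> M \<and> Q (sel i) i + Z (sel i) i = weight M Q Z i"
  shows "Phi3 E M Q Z (served sel x) = (\<Sum>i\<in>x. weight M Q Z i)"
proof -
  have "Phi3 E M Q Z (served sel x) = (\<Sum>i\<in>E. \<Sum>m\<in>M. real (served sel x m i) * (Q m i + Z m i))"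
    unfolding Phi3_def by (rule sum.swap)
  also have "\<dots> = (\<Sum>i\<in>E. if i \<in> x then weight M Q Z i else 0)"
  proof (rule sum.cong[OF refl])
    fix i assume iE: "i \<in> E"
    have "(\<Sum>m\<in>M. real (served sel x m i) * (Q m i + Z m i))
        = (\<Sum>m\<in>M. if m = sel i then (if i \<in> x then Q m i + Z m i else 0) else 0)"
      by (rule sum.cong) (auto simp: served_def)
    also have "\<dots> = (if i \<in> x then weight M Q Z i else 0)"
      using sel iE fM by (simp add: sum.delta')
    finally show "(\<Sum>m\<in>M. real (served sel x m i) * (Q m i + Z m i)) = (if i \<in> x then weight M Q Z i else 0)" .
  qed
  also have "\<dots> = (\<Sum>i\<in>x. weight M Q Z i)"
    using xE fE by (simp add: sum.If_cases Int_absorb1)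
  finally show ?thesis .
qed

lemma Phi3_le_weight:
  assumes fM: "finite M" and fE: "finite E" and fd: "feasible_decision E C M x \<mu>"
  shows "Phi3 E M Q Z \<mu> \<le> (\<Sum>i\<in>x. weight M Q Z i)"
proof -
  have xE: "x \<subseteq> E" using fd by (auto simp: feasible_decision_def feasible_schedule_def)
  have "Phi3 E M Q Z \<mu> = (\<Sum>i\<in>E. \<Sum>m\<in>M. real (\<mu> m i) * (Q m i + Z m i))"
    unfolding Phi3_def by (rule sum.swap)
  also have "\<dots> \<le> (\<Sum>i\<in>E. \<Sum>m\<in>M. real (\<mu> m i) * weight M Q Z i)"
    using fM by (intro sum_mono mult_left_mono) (auto simp: weight_def)
  also have "\<dots> = (\<Sum>i\<in>E. real (\<Sum>m\<in>M. \<mu> m i) * weight M Q Z i)"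
    by (simp add: sum_distrib_right)
  also have "\<dots> = (\<Sum>i\<in>E. if i \<in> x then weight M Q Z i else 0)"
    using fd unfolding feasible_decision_def by (intro sum.cong) auto
  also have "\<dots> = (\<Sum>i\<in>x. weight M Q Z i)"
    using xE fE by (simp add: sum.If_cases Int_absorb1)
  finally show ?thesis .
qed

lemma ex_schedule_weight_ge_Phi3_star:
  assumes fM: "finite M" and fE: "finite E"
  shows "\<exists>x. feasible_schedule E C x \<and> Phi3_star E C M Q Z \<le> (\<Sum>i\<in>x. weight M Q Z i)"
proof -
  define F where "F = {x. feasible_schedule E C x}"
  have "F \<subseteq> Pow E" by (auto simp: F_def feasible_schedule_def)
  then have "finite F" by (rule finite_subset) (use fE in simp)
  moreover have "{} \<in> F" by (simp add: F_def feasible_schedule_def)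
  ultimately have "Max ((\<lambda>x. \<Sum>i\<in>x. weight M Q Z i) ` F) \<in> (\<lambda>x. \<Sum>i\<in>x. weight M Q Z i) ` F"
    by (intro Max_in) auto
  then obtain x\<^sub>o where x\<^sub>o: "x\<^sub>o \<in> F"
    and max: "(\<Sum>i\<in>x\<^sub>o. weight M Q Z i) = Max ((\<lambda>x. \<Sum>i\<in>x. weight M Q Z i) ` F)"
    by auto
  have "Phi3_star E C M Q Z \<le> (\<Sum>i\<in>x\<^sub>o. weight M Q Z i)"
    unfolding Phi3_star_def
  proof (rule cSup_least)
    have "feasible_decision E C M {} (\<lambda>_ _. 0)"
      by (simp add: feasible_decision_def feasible_schedule_def)
    then show "{Phi3 E M Q Z \<mu> |x \<mu>. feasible_decision E C M x \<mu>} \<noteq> {}" by blast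
  next
    fix v assume "v \<in> {Phi3 E M Q Z \<mu> |x \<mu>. feasible_decision E C M x \<mu>}"
    then obtain x \<mu> where v: "v = Phi3 E M Q Z \<mu>" and fd: "feasible_decision E C M x \<mu>" by blast
    have "x \<in> F" using fd by (simp add: feasible_decision_def F_def)
    then have "(\<Sum>i\<in>x. weight M Q Z i) \<le> (\<Sum>i\<in>x\<^sub>o. weight M Q Z i)"
      unfolding max using \<open>finite F\<close> by simp
    then show "v \<le> (\<Sum>i\<in>x\<^sub>o. weight M Q Z i)" using Phi3_le_weight[OF fM fE fd, of Q Z] v by linarith
  qed
  then show ?thesis using x\<^sub>o by (auto simp: F_def)
qed

theorem theorem3:
  fixes E :: "'l set" and C :: "'l \<Rightarrow> 'l set" and M :: "'m set"
    and Q Z :: "'m \<Rightarrow> 'l \<Rightarrow> real" and W :: nat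
    and \<pi> :: "'l set pmf" and sel :: "'l \<Rightarrow> 'm" and \<theta> \<delta> :: real
  assumes "finite E" and "finite M" and "M \<noteq> {}"
    and "\<forall>i\<in>E. C i \<subseteq> E" and "\<forall>i\<in>E. i \<notin> C i" and "\<forall>i\<in>E. \<forall>j\<in>C i. i \<in> C j"
    and "\<forall>m i. Q m i \<ge> 0" and "\<forall>m i. Z m i \<ge> 0"
    and "W \<ge> 2"
    and stationary: "bind_pmf \<pi> (csma_step E C W (act_prob M Q Z)) = \<pi>"
    and support: "set_pmf \<pi> \<subseteq> {x. feasible_schedule E C x}"
    and sel: "\<forall>i\<in>E. sel i \<in> M \<and> Q (sel i) i + Z (sel i) i = weight M Q Z i"
    and "0 < \<theta>" and "\<theta> < 1" and "0 < \<delta>" and "\<delta> < 1"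
    and "Phi3_star E C M Q Z \<ge> (1 / \<theta>) * (real (card E) * ln 2 + ln (1 / \<delta>))"
  shows "measure_pmf.prob \<pi> {x. Phi3 E M Q Z (served sel x) \<ge> (1 - \<theta>) * Phi3_star E C M Q Z}
           > 1 - \<delta>"
proof -
  note fin = assms(1) and fM = assms(2) and CE = assms(4) and irr = assms(5) and sym = assms(6)
    and W = assms(9) and \<theta> = assms(13) and \<delta> = assms(15) and large = assms(17)
  define F where "F = {x. feasible_schedule E C x}"
  define U where "U x = Phi3 E M Q Z (served sel x)" for x
  have F_Pow: "F \<subseteq> Pow E" by (auto simp: F_def feasible_schedule_def)
  then have fin_F: "finite F" by (rule finite_subset) (use fin in simp)
  have card_F: "card F \<le> 2 ^ card E"
    using card_mono[OF _ F_Pow] fin by (simp add: card_Pow)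
  have U_weight: "U x = (\<Sum>i\<in>x. weight M Q Z i)" if "x \<in> F" for x
    using Phi3_served[OF fM fin _ sel] that by (auto simp: U_def F_def feasible_schedule_def)
  have gibbs: "\<forall>x\<in>F. pmf \<pi> x = exp (U x) / (\<Sum>y\<in>F. exp (U y))"
    using csma_stationary_gibbs[OF fin CE irr sym W stationary[unfolded act_prob_logistic] support]
    by (simp add: U_weight F_def)
  obtain x\<^sub>o where "x\<^sub>o \<in> F" "Phi3_star E C M Q Z \<le> U x\<^sub>o"
    using ex_schedule_weight_ge_Phi3_star[OF fM fin, of C Q Z] by (auto simp: U_weight F_def)
  moreover have "real (card E) * ln 2 + ln (1 / \<delta>) \<le> \<theta> * Phi3_star E C M Q Z"
    using large \<theta> by (simp add: field_simps)
  ultimately show ?thesis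
    using gibbs_lower_tail[OF fin_F card_F _ gibbs _ _ \<delta>] support
    by (simp add: U_def F_def)
qed

end
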